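(* For all finite sets of formulas $\Gamma,\Delta$: if the sequent $\Gamma\Rightarrow\Delta$ is provable in $\mathsf{CLp}$, then $\Gamma\Vdash\Delta$.
   Context: Fix a countably infinite set $\mathsf{At}$ of atoms. Formulas are built from atoms and the constant $\bot$ using the binary connectives $\land,\lor,\to$. All contexts are finite sets (not multisets) of formulas; a comma denotes union; a subscript $\mathsf{At}$ indicates a finite set of atoms. An atomic sequent has the form $\Gamma_{\mathsf{At}} \Rightarrow \Delta_{\mathsf{At}}$. An atomic rule has finitely many (possibly zero) atomic sequents as premises and one atomic sequent as conclusion; a rule with zero premises is an atomic axiom. A base is a (possibly empty) set of atomic rules; $\mathcal{C}\supseteq\mathcal{B}$ ($\mathcal{C}$ extends $\mathcal{B}$) if $\mathcal{C}$ contains every rule of $\mathcal{B}$. Derivability $\vdash_{\mathcal{B}}$ of atomic sequents is the least relation such that: (Axiom/Weakening) if an atomic axiom with conclusion $\Gamma_{\mathsf{At}}\Rightarrow\Delta_{\mathsf{At}}$ is in $\mathcal{B}$, then $\vdash_{\mathcal{B}} \Theta_{\mathsf{At}},\Gamma_{\mathsf{At}}\Rightarrow\Delta_{\mathsf{At}},\Sigma_{\mathsf{At}}$ for all sets of atoms $\Theta_{\mathsf{At}},\Sigma_{\mathsf{At}}$; (Mix) if a rule with premises $\Gamma^i_{\mathsf{At}}\Rightarrow\Delta^i_{\mathsf{At}}$ ($1\le i\le n$) and conclusion $\Gamma_{\mathsf{At}}\Rightarrow\Delta_{\mathsf{At}}$ is in $\mathcal{B}$ and $\vdash_{\mathcal{B}}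 \Theta^i_{\mathsf{At}},\Gamma^i_{\mathsf{At}}\Rightarrow\Delta^i_{\mathsf{At}},\Sigma^i_{\mathsf{At}}$ for each $i$, then $\vdash_{\mathcal{B}} \Theta^1_{\mathsf{At}},\dots,\Theta^n_{\mathsf{At}},\Gamma_{\mathsf{At}}\Rightarrow\Delta_{\mathsf{At}},\Sigma^1_{\mathsf{At}},\dots,\Sigma^n_{\mathsf{At}}$. Support $\Vdash_{\mathcal{B}}$: (At) $\Vdash_{\mathcal{B}}\Gamma_{\mathsf{At}}$ iff $\vdash_{\mathcal{B}}\ \Rightarrow\Gamma_{\mathsf{At}}$; ($\land$) $\Vdash_{\mathcal{B}} A\land B,\Gamma$ iff $\Vdash_{\mathcal{B}}A,\Gamma$ and $\Vdash_{\mathcal{B}}B,\Gamma$; ($\lor$) $\Vdash_{\mathcal{B}}A\lor B,\Gamma$ iff $\Vdash_{\mathcal{B}}A,B,\Gamma$; ($\to$) $\Vdash_{\mathcal{B}}A\to B,\Gamma$ iff $A\Vdash_{\mathcal{B}}B,\Gamma$; ($\bot$) $\Vdash_{\mathcal{B}}\bot,\Gamma$ iff $\Vdash_{\mathcal{B}}\Gamma$; (Inf) for $n\ge1$, $\{A^1,\dots,A^n\}\Vdash_{\mathcal{B}}\Delta$ iff for every $\mathcal{C}\supseteq\mathcal{B}$ and all sets of atoms $\Theta^1_{\mathsf{At}},\dots,\Theta^n_{\mathsf{At}}$, if $\Vdash_{\mathcal{C}}\Theta^i_{\mathsf{At}},A^i$ for all $i$ then $\Vdash_{\mathcal{C}}\Theta^1_{\mathsf{At}},\dots,\Theta^n_{\mathsf{At}},\Delta$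 (and $\varnothing\Vdash_{\mathcal{B}}\Delta$ means $\Vdash_{\mathcal{B}}\Delta$). The atomic identity rule $\mathsf{Ainit}$ is the atomic axiom $\Gamma_{\mathsf{At}},p\Rightarrow p,\Delta_{\mathsf{At}}$; the atomic cut rule $\mathsf{Acut}$ has premises $\Gamma^1_{\mathsf{At}}\Rightarrow\Delta^1_{\mathsf{At}},p$ and $p,\Gamma^2_{\mathsf{At}}\Rightarrow\Delta^2_{\mathsf{At}}$ and conclusion $\Gamma^1_{\mathsf{At}},\Gamma^2_{\mathsf{At}}\Rightarrow\Delta^1_{\mathsf{At}},\Delta^2_{\mathsf{At}}$. $\mathcal{ST}$ is the base consisting of all instances of $\mathsf{Ainit}$ and $\mathsf{Acut}$ (all atoms $p$, all sets of atoms). Validity: $\Gamma\Vdash\Delta$ iff $\Gamma\Vdash_{\mathcal{B}}\Delta$ for every base $\mathcal{B}\supseteq\mathcal{ST}$. $\mathsf{CLp}$ is the sequent calculus on sequents $\Gamma\Rightarrow\Delta$ (finite sets of formulas) with rules: $\mathsf{init}$: $\Gamma,A\Rightarrow A,\Delta$; $L\bot$: $\Gamma,\bot\Rightarrow\Delta$; $R\bot$: from $\Gamma\Rightarrow\Delta$ infer $\Gamma\Rightarrow\bot,\Delta$; $L\land$: from $A,B,\Gamma\Rightarrow\Delta$ infer $A\land B,\Gamma\Rightarrow\Delta$; $R\land$: from $\Gamma\Rightarrow\Delta,A$ and $\Gamma'\Rightarrow\Delta',B$ infer $\Gamma,\Gamma'\Rightarrow\Delta,\Delta',A\land B$; $L\lor$: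 from $A,\Gamma\Rightarrow\Delta$ and $B,\Gamma'\Rightarrow\Delta'$ infer $A\lor B,\Gamma,\Gamma'\Rightarrow\Delta,\Delta'$; $R\lor$: from $\Gamma\Rightarrow\Delta,A,B$ infer $\Gamma\Rightarrow\Delta,A\lor B$; $L\to$: from $\Gamma\Rightarrow\Delta,A$ and $B,\Gamma'\Rightarrow\Delta'$ infer $A\to B,\Gamma,\Gamma'\Rightarrow\Delta,\Delta'$; $R\to$: from $A,\Gamma\Rightarrow\Delta,B$ infer $\Gamma\Rightarrow\Delta,A\to B$. *)

theory Defs
  imports Main
begin

section \<open>Formulas (atoms are natural numbers: a countably infinite set)\<close>

datatype form = Atom nat | Bot | And form form | Or form form | Imp form form

type_synonym aseq = "nat set \<times> nat set"
type_synonym arule = "aseq list \<times> aseq"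

definition fin_aseq :: "aseq \<Rightarrow> bool" where
  "fin_aseq s \<longleftrightarrow> finite (fst s) \<and> finite (snd s)"

definition atomic_rule :: "arule \<Rightarrow> bool" where
  "atomic_rule r \<longleftrightarrow> (\<forall>s\<in>set (fst r). fin_aseq s) \<and> fin_aseq (snd r)"

definition is_base :: "arule set \<Rightarrow> bool" where
  "is_base \<B> \<longleftrightarrow> (\<forall>r\<in>\<B>. atomic_rule r)"

inductive derivable :: "arule set \<Rightarrow> nat set \<Rightarrow> nat set \<Rightarrow> bool" for \<B> where
  axiom_weak: "([], (\<Gamma>, \<Delta>)) \<in> \<B> \<Longrightarrow> finite \<Theta> \<Longrightarrow> finite \<Sigma> \<Longrightarrow>
     derivable \<B> (\<Theta> \<union> \<Gamma>) (\<Delta> \<union> \<Sigma>)"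
| mix: "(prems, (\<Gamma>, \<Delta>)) \<in> \<B> \<Longrightarrow> length \<Theta>s = length prems \<Longrightarrow> length \<Sigma>s = length prems \<Longrightarrow>
     (\<forall>i<length prems. finite (\<Theta>s ! i) \<and> finite (\<Sigma>s ! i) \<and>
        derivable \<B> (\<Theta>s ! i \<union> fst (prems ! i)) (snd (prems ! i) \<union> \<Sigma>s ! i)) \<Longrightarrow>
     derivable \<B> (\<Union> (set \<Theta>s) \<union> \<Gamma>) (\<Delta> \<union> \<Union> (set \<Sigma>s))"

fun wt :: "form \<Rightarrow> nat" where
  "wt (Atom p) = 0"
| "wt Bot = 1"
| "wt (And A B) = wt A + wt B + 1"
| "wt (Or A B) = wt A + wt B + 1"
| "wt (Imp A B) = wt A + wt B + 1"

definition wset :: "form set \<Rightarrow> nat" where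
  "wset S = (\<Sum>F\<in>S. wt F)"

definition atoms_of :: "form set \<Rightarrow> nat set" where
  "atoms_of S = {p. Atom p \<in> S}"

declare form.case_cong[fundef_cong]

lemma wset_insert_le: "finite S \<Longrightarrow> wset (insert A S) \<le> wt A + wset S"
  unfolding wset_def by (simp add: sum.insert_if)

lemma wset_remove: "finite S \<Longrightarrow> F \<in> S \<Longrightarrow> wset S = wt F + wset (S - {F})"
  unfolding wset_def by (simp add: sum.remove)

lemma wset_atoms_union: "finite T \<Longrightarrow> finite S \<Longrightarrow> wset (Atom ` T \<union> S) \<le> wset S"
proof -
  assume fT: "finite T" and fS: "finite S"
  have "wset (Atom ` T \<union> S) \<le> wset (Atom ` T) + wset S"
    unfolding wset_def using fT fS by (intro sum_Un_nat[THEN eq_imp_le, THEN order_trans]) auto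
  moreover have "wset (Atom ` T) = 0" unfolding wset_def by (rule sum.neutral) auto
  ultimately show ?thesis by simp
qed

lemma some_mem: "\<not> S \<subseteq> range Atom \<Longrightarrow> (SOME F. F \<in> S \<and> F \<notin> range Atom) \<in> S"
  by (metis (mono_tags, lifting) someI_ex subsetI)

lemma wset_mono: "finite Y \<Longrightarrow> X \<subseteq> Y \<Longrightarrow> wset X \<le> wset Y"
  unfolding wset_def by (rule sum_mono2) auto

lemma wset_un: "finite X \<Longrightarrow> finite Y \<Longrightarrow> wset (X \<union> Y) \<le> wset X + wset Y"
  unfolding wset_def by (simp add: sum_Un_nat)

lemma wset_key:
  assumes "finite S" "F \<in> S" "finite T" "finite X" "wset X < wt F"
  shows "wset (Atom ` T \<union> (X \<union> (S - {F}))) < wset S"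
proof -
  have "wset (Atom ` T \<union> (X \<union> (S - {F}))) \<le> wset (X \<union> (S - {F}))"
    using assms by (intro wset_atoms_union) auto
  also have "\<dots> \<le> wset X + wset (S - {F})" using assms by (intro wset_un) auto
  also have "\<dots> < wt F + wset (S - {F})" using assms by simp
  also have "\<dots> = wset S" using assms by (simp add: wset_remove)
  finally show ?thesis .
qed

lemma wset_two: "wset {a, b} \<le> wt a + wt b"
  unfolding wset_def by (cases "a = b") auto

text \<open>The
clauses of the paper are applied to a canonically chosen non-atomic member of
the context; the contexts in the premises of the clauses are the context with
that formula removed.  Infinite contexts are never supported (they do not
arise).  The sets of atoms \<open>\<Theta>\<close> in (Inf) are finite, represented as the
elements of a list.\<close>

function supp :: "arule set \<Rightarrow> form set \<Rightarrow> bool" where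
  "supp \<B> S =
    (if \<not> finite S then False
     else if S \<subseteq> range Atom then derivable \<B> {} (atoms_of S)
     else (let F = (SOME F. F \<in> S \<and> F \<notin> range Atom); R = S - {F} in
       (case F of
          Atom p \<Rightarrow> False
        | Bot \<Rightarrow> supp \<B> R
        | And A B \<Rightarrow> supp \<B> (insert A R) \<and> supp \<B> (insert B R)
        | Or A B \<Rightarrow> supp \<B> (insert A (insert B R))
        | Imp A B \<Rightarrow> (\<forall>\<C> (\<Theta>::nat list). is_base \<C> \<and> \<B> \<subseteq> \<C> \<longrightarrow>
              supp \<C> (Atom ` set \<Theta> \<union> {A}) \<longrightarrow> supp \<C> (Atom ` set \<Theta> \<union> insert B R)))))"
  by pat_completeness auto
termination
  apply (relation "measure (\<lambda>(\<B>, S). wset S)")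
  apply simp_all
  subgoal for S
    using some_mem[of S] by (simp add: wset_remove)
  subgoal for S x xa A B
  proof -
    assume h: "finite S" "\<not> S \<subseteq> range Atom" "And A B = (SOME F. F \<in> S \<and> F \<notin> range Atom)"
    then have "(SOME F. F \<in> S \<and> F \<notin> range Atom) \<in> S" using some_mem[of S] by simp
    moreover have "wset {A} < wt (SOME F. F \<in> S \<and> F \<notin> range Atom)" using h by (simp add: wset_def flip: h(3))
    ultimately show ?thesis using h wset_key[of S "(SOME F. F \<in> S \<and> F \<notin> range Atom)" "{}" "{A}"] by simp
  qed
  subgoal for S x xa A B
  proof -
    assume h: "finite S" "\<not> S \<subseteq> range Atom" "And A B = (SOME F. F \<in> S \<and> F \<notin> range Atom)"
    then have "(SOME F. F \<in> S \<and> F \<notin> range Atom) \<in> S" using some_mem[of S] by simp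
    moreover have "wset {B} < wt (SOME F. F \<in> S \<and> F \<notin> range Atom)" using h by (simp add: wset_def flip: h(3))
    ultimately show ?thesis using h wset_key[of S "(SOME F. F \<in> S \<and> F \<notin> range Atom)" "{}" "{B}"] by simp
  qed
  subgoal for S x xa A B
  proof -
    assume h: "finite S" "\<not> S \<subseteq> range Atom" "Or A B = (SOME F. F \<in> S \<and> F \<notin> range Atom)"
    then have "(SOME F. F \<in> S \<and> F \<notin> range Atom) \<in> S" using some_mem[of S] by simp
    moreover have "wset {A, B} < wt (SOME F. F \<in> S \<and> F \<notin> range Atom)" using wset_two[of A B] by (simp flip: h(3))
    ultimately show ?thesis using h wset_key[of S "(SOME F. F \<in> S \<and> F \<notin> range Atom)" "{}" "{A, B}"] by simp
  qed
  subgoal for B0 S x xa A B C Th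
  proof -
    assume h: "finite S" "\<not> S \<subseteq> range Atom" "Imp A B = (SOME F. F \<in> S \<and> F \<notin> range Atom)"
    then have m: "(SOME F. F \<in> S \<and> F \<notin> range Atom) \<in> S" using some_mem[of S] by simp
    have "wset (Atom ` set Th \<union> {A}) \<le> wset {A}" by (rule wset_atoms_union) auto
    moreover have "wset {A} < wt (SOME F. F \<in> S \<and> F \<notin> range Atom)" by (simp add: wset_def flip: h(3))
    moreover have "wt (SOME F. F \<in> S \<and> F \<notin> range Atom) \<le> wset S" using h m by (simp add: wset_remove)
    ultimately show ?thesis by simp
  qed
  subgoal for B0 S x xa A B C Th
  proof -
    assume h: "finite S" "\<not> S \<subseteq> range Atom" "Imp A B = (SOME F. F \<in> S \<and> F \<notin> range Atom)"
    then have "(SOME F. F \<in> S \<and> F \<notin> range Atom) \<in> S" using some_mem[of S] by simp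
    moreover have "wset {B} < wt (SOME F. F \<in> S \<and> F \<notin> range Atom)" by (simp add: wset_def flip: h(3))
    ultimately show ?thesis using h wset_key[of S "(SOME F. F \<in> S \<and> F \<notin> range Atom)" "set Th" "{B}"] by simp
  qed
  done



text \<open>Inference \<open>\<Gamma> \<Vdash>\<^sub>\<B> \<Delta>\<close>; the formulas \<open>A\<^sup>i\<close> of \<open>\<Gamma>\<close> are indexed by
themselves, so \<open>\<Theta>\<close> assigns a finite set of atoms (a list) to each member.\<close>

definition inf :: "arule set \<Rightarrow> form set \<Rightarrow> form set \<Rightarrow> bool" where
  "inf \<B> \<Gamma> \<Delta> =
    (if \<Gamma> = {} then supp \<B> \<Delta>
     else (\<forall>\<C> (\<Theta>::form \<Rightarrow> nat list). is_base \<C> \<and> \<B> \<subseteq> \<C> \<longrightarrow>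
             (\<forall>A\<in>\<Gamma>. supp \<C> (Atom ` set (\<Theta> A) \<union> {A})) \<longrightarrow>
             supp \<C> (Atom ` (\<Union>A\<in>\<Gamma>. set (\<Theta> A)) \<union> \<Delta>)))"

definition Ainit :: "arule set" where
  "Ainit = {([], (insert p \<Gamma>, insert p \<Delta>)) | p \<Gamma> \<Delta>. finite \<Gamma> \<and> finite \<Delta>}"

definition Acut :: "arule set" where
  "Acut = {([(\<Gamma>1, insert p \<Delta>1), (insert p \<Gamma>2, \<Delta>2)], (\<Gamma>1 \<union> \<Gamma>2, \<Delta>1 \<union> \<Delta>2)) | p \<Gamma>1 \<Delta>1 \<Gamma>2 \<Delta>2.
            finite \<Gamma>1 \<and> finite \<Delta>1 \<and> finite \<Gamma>2 \<and> finite \<Delta>2}"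

definition ST :: "arule set" where
  "ST = Ainit \<union> Acut"

definition valid :: "form set \<Rightarrow> form set \<Rightarrow> bool" where
  "valid \<Gamma> \<Delta> \<longleftrightarrow> (\<forall>\<B>. is_base \<B> \<and> ST \<subseteq> \<B> \<longrightarrow> inf \<B> \<Gamma> \<Delta>)"

inductive CLp :: "form set \<Rightarrow> form set \<Rightarrow> bool" where
  init: "finite \<Gamma> \<Longrightarrow> finite \<Delta> \<Longrightarrow> CLp (insert A \<Gamma>) (insert A \<Delta>)"
| LBot: "finite \<Gamma> \<Longrightarrow> finite \<Delta> \<Longrightarrow> CLp (insert Bot \<Gamma>) \<Delta>"
| RBot: "CLp \<Gamma> \<Delta> \<Longrightarrow> CLp \<Gamma> (insert Bot \<Delta>)"
| LAnd: "CLp (insert A (insert B \<Gamma>)) \<Delta> \<Longrightarrow> CLp (insert (And A B) \<Gamma>) \<Delta>"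
| RAnd: "CLp \<Gamma> (insert A \<Delta>) \<Longrightarrow> CLp \<Gamma>' (insert B \<Delta>') \<Longrightarrow>
           CLp (\<Gamma> \<union> \<Gamma>') (insert (And A B) (\<Delta> \<union> \<Delta>'))"
| LOr: "CLp (insert A \<Gamma>) \<Delta> \<Longrightarrow> CLp (insert B \<Gamma>') \<Delta>' \<Longrightarrow>
           CLp (insert (Or A B) (\<Gamma> \<union> \<Gamma>')) (\<Delta> \<union> \<Delta>')"
| ROr: "CLp \<Gamma> (insert A (insert B \<Delta>)) \<Longrightarrow> CLp \<Gamma> (insert (Or A B) \<Delta>)"
| LImp: "CLp \<Gamma> (insert A \<Delta>) \<Longrightarrow> CLp (insert B \<Gamma>') \<Delta>' \<Longrightarrow>
           CLp (insert (Imp A B) (\<Gamma> \<union> \<Gamma>')) (\<Delta> \<union> \<Delta>')"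
| RImp: "CLp (insert A \<Gamma>) (insert B \<Delta>) \<Longrightarrow> CLp \<Gamma> (insert (Imp A B) \<Delta>)"

end

theory Submission
  imports Defs "HOL-Library.Multiset"
begin

text \<open>Soundness is proved rule by rule, and in fact in every base, not only in those extending
\<open>ST\<close>: the cuts needed for the left rules of disjunction and implication are admissible at the
level of support, since the hypothesis \<open>A \<Vdash> Z\<close> provided by (Inf) applies as soon as the rest
of the context has been decomposed down to atoms.

The technical core is that the support clauses, which the definition of \<open>supp\<close> applies to one
canonically chosen non-atomic formula, hold for every formula of the context. This is shown via a
list version of support that always decomposes the head of the list: it is invariant under
permutations, because the clauses for two different formulas commute, and under contraction.\<close>

declare supp.simps[simp del]

lemma supp_infinite: "infinite S \<Longrightarrow> \<not> supp B S"
  by (subst supp.simps) simp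

lemma supp_finite: "supp B S \<Longrightarrow> finite S"
  using supp_infinite by blast

lemma supp_atomic: "finite S \<Longrightarrow> S \<subseteq> range Atom \<Longrightarrow> supp B S = derivable B {} (atoms_of S)"
  by (subst supp.simps) simp

lemma supp_unfold:
  assumes "finite S" "\<not> S \<subseteq> range Atom" "F = (SOME F. F \<in> S \<and> F \<notin> range Atom)"
  shows "supp B S = (case F of Atom p \<Rightarrow> False | Bot \<Rightarrow> supp B (S - {F})
        | And A C \<Rightarrow> supp B (insert A (S - {F})) \<and> supp B (insert C (S - {F}))
        | Or A C \<Rightarrow> supp B (insert A (insert C (S - {F})))
        | Imp A C \<Rightarrow> (\<forall>B' (\<Theta>::nat list). is_base B' \<and> B \<subseteq> B' \<longrightarrow>
              supp B' (Atom ` set \<Theta> \<union> {A}) \<longrightarrow> supp B' (Atom ` set \<Theta> \<union> insert C (S - {F}))))"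
  using assms(1,2) by (subst supp.simps) (simp add: Let_def flip: assms(3))

lemma derivable_mono_base: "derivable B \<Gamma> \<Delta> \<Longrightarrow> B \<subseteq> C \<Longrightarrow> derivable C \<Gamma> \<Delta>"
proof (induction rule: derivable.induct)
  case (axiom_weak \<Gamma> \<Delta> \<Theta> \<Sigma>)
  then show ?case by (auto intro: derivable.axiom_weak)
next
  case (mix prems \<Gamma> \<Delta> \<Theta>s \<Sigma>s)
  then show ?case by (intro derivable.mix) auto
qed

lemma derivable_weaken_right: "derivable B \<Gamma> \<Delta> \<Longrightarrow> finite Q \<Longrightarrow> derivable B \<Gamma> (\<Delta> \<union> Q)"
proof (induction rule: derivable.induct)
  case (axiom_weak \<Gamma> \<Delta> \<Theta> \<Sigma>)
  then show ?case using derivable.axiom_weak[of \<Gamma> \<Delta> B \<Theta> "\<Sigma> \<union> Q"] by (simp add: Un_assoc)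
next
  case (mix prems \<Gamma> \<Delta> \<Theta>s \<Sigma>s)
  show ?case
  proof (cases prems)
    case Nil
    then show ?thesis using mix derivable.axiom_weak[of \<Gamma> \<Delta> B "{}" Q] by simp
  next
    case (Cons _ _)
    \<comment> \<open>add \<open>Q\<close> to the right weakening of the first premise\<close>
    define \<Sigma>s' where "\<Sigma>s' = \<Sigma>s[0 := \<Sigma>s ! 0 \<union> Q]"
    have "\<Sigma>s \<noteq> []" using Cons mix(3) by auto
    then have Un_\<Sigma>s': "\<Union> (set \<Sigma>s') = \<Union> (set \<Sigma>s) \<union> Q"
      unfolding \<Sigma>s'_def by (cases \<Sigma>s) auto
    have "\<forall>i<length prems. finite (\<Theta>s ! i) \<and> finite (\<Sigma>s' ! i) \<and>
        derivable B (\<Theta>s ! i \<union> fst (prems ! i)) (snd (prems ! i) \<union> \<Sigma>s' ! i)"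
    proof (intro allI impI)
      fix i assume "i < length prems"
      then show "finite (\<Theta>s ! i) \<and> finite (\<Sigma>s' ! i) \<and>
          derivable B (\<Theta>s ! i \<union> fst (prems ! i)) (snd (prems ! i) \<union> \<Sigma>s' ! i)"
        using mix.IH mix.prems mix(3) by (cases "i = 0") (auto simp: \<Sigma>s'_def Un_assoc)
    qed
    then have "derivable B (\<Union> (set \<Theta>s) \<union> \<Gamma>) (\<Delta> \<union> \<Union> (set \<Sigma>s'))"
      using mix(1-3) by (intro derivable.mix) (auto simp: \<Sigma>s'_def)
    then show ?thesis by (simp add: Un_\<Sigma>s' Un_assoc)
  qed
qed

lemma supp_mono_base: "supp B S \<Longrightarrow> B \<subseteq> C \<Longrightarrow> supp C S"
proof (induction B S arbitrary: C rule: supp.induct)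
  case (1 B S)
  show ?case
  proof (cases "finite S \<and> \<not> S \<subseteq> range Atom")
    case False
    then show ?thesis
      using 1(7,8) supp_infinite[of S] supp_atomic[of S] by (metis derivable_mono_base)
  next
    case True
    define F where "F = (SOME F. F \<in> S \<and> F \<notin> range Atom)"
    note unfold = supp_unfold[OF conjunct1[OF True] conjunct2[OF True] F_def]
    have "\<not> infinite S" "\<not> S \<subseteq> range Atom" using True by auto
    note IH = 1(1-6)[OF this F_def refl]
    show ?thesis
    proof (cases F)
      case Bot
      then show ?thesis using 1(7,8) IH(1) unfolding unfold by simp
    next
      case (And A1 A2)
      then show ?thesis using 1(7,8) IH(2,3) unfolding unfold by simp
    next
      case (Or A1 A2)
      then show ?thesis using 1(7,8) IH(4) unfolding unfold by simp
    next
      case (Imp A1 A2)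
      then show ?thesis using 1(7,8) unfolding unfold by auto
    qed (use 1(7) unfold in simp)
  qed
qed

text \<open>Each entry weighs at least one, and the factor two pays for splitting \<open>Or A C\<close> into
two entries.\<close>

definition list_weight :: "form list \<Rightarrow> nat" where
  "list_weight xs = (\<Sum>F\<leftarrow>xs. 2 * wt F + 1)"

lemma list_weight_simps [simp]:
  "list_weight [] = 0"
  "list_weight (F # xs) = 2 * wt F + 1 + list_weight xs"
  "list_weight (xs @ ys) = list_weight xs + list_weight ys"
  by (auto simp: list_weight_def)

lemma list_weight_mset: "mset xs = mset ys \<Longrightarrow> list_weight xs = list_weight ys"
  unfolding list_weight_def by (metis mset_map sum_mset_sum_list)

text \<open>Support of the context \<open>Atom ` P \<union> set xs\<close>, always decomposing the head of the list; the
atoms met on the way are collected in \<open>P\<close>.\<close>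

function supp_list :: "arule set \<Rightarrow> form list \<Rightarrow> nat set \<Rightarrow> bool" where
  "supp_list B [] P = derivable B {} P"
| "supp_list B (Atom p # xs) P = supp_list B xs (insert p P)"
| "supp_list B (Bot # xs) P = supp_list B xs P"
| "supp_list B (And A C # xs) P = (supp_list B (A # xs) P \<and> supp_list B (C # xs) P)"
| "supp_list B (Or A C # xs) P = supp_list B (A # C # xs) P"
| "supp_list B (Imp A C # xs) P = (\<forall>B' (\<Theta>::nat list). is_base B' \<and> B \<subseteq> B' \<longrightarrow>
      supp B' (Atom ` set \<Theta> \<union> {A}) \<longrightarrow> supp_list B' (C # xs) (P \<union> set \<Theta>))"
  by pat_completeness auto
termination by (relation "measure (\<lambda>(B, xs, P). list_weight xs)") auto

text \<open>The clause for a principal formula \<open>F\<close>, with the obligations for the formulas replacing it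
left to the continuation \<open>K\<close>.\<close>

fun decompose ::
  "form \<Rightarrow> (arule set \<Rightarrow> form list \<Rightarrow> nat set \<Rightarrow> bool) \<Rightarrow> arule set \<Rightarrow> nat set \<Rightarrow> bool" where
  "decompose (Atom p) K B P = K B [] (insert p P)"
| "decompose Bot K B P = K B [] P"
| "decompose (And A C) K B P = (K B [A] P \<and> K B [C] P)"
| "decompose (Or A C) K B P = K B [A, C] P"
| "decompose (Imp A C) K B P = (\<forall>B' (\<Theta>::nat list). is_base B' \<and> B \<subseteq> B' \<longrightarrow>
      supp B' (Atom ` set \<Theta> \<union> {A}) \<longrightarrow> K B' [C] (P \<union> set \<Theta>))"

fun components :: "form \<Rightarrow> form list set" where
  "components (Atom p) = {[]}"
| "components Bot = {[]}"
| "components (And A C) = {[A], [C]}"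
| "components (Or A C) = {[A, C]}"
| "components (Imp A C) = {[C]}"

lemma supp_list_Cons: "supp_list B (F # xs) P = decompose F (\<lambda>B L P. supp_list B (L @ xs) P) B P"
  by (cases F) auto

lemma decompose_cong:
  "(\<And>B' P' L. L \<in> components F \<Longrightarrow> K1 B' L P' = K2 B' L P') \<Longrightarrow>
   decompose F K1 B P = decompose F K2 B P"
  by (cases F) auto

lemma list_weight_components: "L \<in> components F \<Longrightarrow> list_weight L < 2 * wt F + 1"
  by (cases F) auto

lemma decompose_commute:
  "decompose G (\<lambda>B L P. decompose F (\<lambda>B' M P'. K B' M L P') B P) B P =
   decompose F (\<lambda>B M P. decompose G (\<lambda>B' L P'. K B' M L P') B P) B P"
proof (cases G)
  case G: (Imp A C)
  show ?thesis
  proof (cases F)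
    case (Imp D E)
    \<comment> \<open>two nested extensions of \<open>B\<close> can be swapped since support is monotone in the base\<close>
    have swap: "(\<forall>B1 \<Theta>1. is_base B1 \<and> B \<subseteq> B1 \<longrightarrow> supp B1 (Atom ` set \<Theta>1 \<union> {X}) \<longrightarrow>
             (\<forall>B2 \<Theta>2. is_base B2 \<and> B1 \<subseteq> B2 \<longrightarrow> supp B2 (Atom ` set \<Theta>2 \<union> {Y}) \<longrightarrow>
                R B2 (P \<union> set \<Theta>1 \<union> set \<Theta>2)))
        \<Longrightarrow> (\<forall>B1 \<Theta>1. is_base B1 \<and> B \<subseteq> B1 \<longrightarrow> supp B1 (Atom ` set \<Theta>1 \<union> {Y}) \<longrightarrow>
             (\<forall>B2 \<Theta>2. is_base B2 \<and> B1 \<subseteq> B2 \<longrightarrow> supp B2 (Atom ` set \<Theta>2 \<union> {X}) \<longrightarrow>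
                R B2 (P \<union> set \<Theta>1 \<union> set \<Theta>2)))" for X Y R
    proof (intro allI impI)
      fix B1 B2 :: "arule set" and \<Theta>1 \<Theta>2 :: "nat list"
      assume h: "\<forall>B1 \<Theta>1. is_base B1 \<and> B \<subseteq> B1 \<longrightarrow> supp B1 (Atom ` set \<Theta>1 \<union> {X}) \<longrightarrow>
             (\<forall>B2 \<Theta>2. is_base B2 \<and> B1 \<subseteq> B2 \<longrightarrow> supp B2 (Atom ` set \<Theta>2 \<union> {Y}) \<longrightarrow>
                R B2 (P \<union> set \<Theta>1 \<union> set \<Theta>2))"
        and B1: "is_base B1 \<and> B \<subseteq> B1" "supp B1 (Atom ` set \<Theta>1 \<union> {Y})"
        and B2: "is_base B2 \<and> B1 \<subseteq> B2" "supp B2 (Atom ` set \<Theta>2 \<union> {X})"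
      have "supp B2 (Atom ` set \<Theta>1 \<union> {Y})" using B1 B2 supp_mono_base by blast
      then have "R B2 (P \<union> set \<Theta>2 \<union> set \<Theta>1)" using h B1 B2 by blast
      then show "R B2 (P \<union> set \<Theta>1 \<union> set \<Theta>2)" by (simp add: Un_ac)
    qed
    show ?thesis
      unfolding G Imp decompose.simps
      using swap[of A D "\<lambda>B2. K B2 [E] [C]"] swap[of D A "\<lambda>B2. K B2 [E] [C]"] by (intro iffI)
  qed (auto simp: G Un_ac insert_commute)
qed (cases F; auto simp: Un_ac insert_commute)+

lemma supp_list_Cons_cong:
  "(\<And>B' L P'. L \<in> components G \<Longrightarrow> supp_list B' (L @ xs) P' = supp_list B' (L @ ys) P') \<Longrightarrow>
   supp_list B (G # xs) P = supp_list B (G # ys) P"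
  unfolding supp_list_Cons by (rule decompose_cong)

lemma supp_list_swap_heads:
  assumes perm: "\<And>B' xs ys P'. list_weight xs < list_weight (G # F # r) \<Longrightarrow> mset xs = mset ys \<Longrightarrow>
    supp_list B' xs P' = supp_list B' ys P'"
  shows "supp_list B (G # F # r) P = supp_list B (F # G # r) P"
proof -
  have "supp_list B (G # F # r) P =
      decompose G (\<lambda>B L P. decompose F (\<lambda>B' M P'. supp_list B' (M @ L @ r) P') B P) B P"
    unfolding supp_list_Cons[of B G]
  proof (rule decompose_cong)
    fix B' P' L assume "L \<in> components G"
    then have "supp_list B' (L @ F # r) P' = supp_list B' (F # L @ r) P'"
      using list_weight_components[of L G] by (intro perm) simp_all
    then show "supp_list B' (L @ F # r) P' =
        decompose F (\<lambda>B' M P'. supp_list B' (M @ L @ r) P') B' P'"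
      by (simp add: supp_list_Cons)
  qed
  also have "\<dots> =
      decompose F (\<lambda>B M P. decompose G (\<lambda>B' L P'. supp_list B' (M @ L @ r) P') B P) B P"
    by (rule decompose_commute)
  also have "\<dots> =
      decompose F (\<lambda>B M P. decompose G (\<lambda>B' L P'. supp_list B' (L @ M @ r) P') B P) B P"
  proof (intro decompose_cong)
    fix B1 P1 M B2 P2 L assume "M \<in> components F" "L \<in> components G"
    then show "supp_list B2 (M @ L @ r) P2 = supp_list B2 (L @ M @ r) P2"
      using list_weight_components[of M F] list_weight_components[of L G]
      by (intro perm) (simp_all add: ac_simps)
  qed
  also have "\<dots> = supp_list B (F # G # r) P"
    unfolding supp_list_Cons[of B F]
  proof (rule decompose_cong)
    fix B' P' M assume "M \<in> components F"
    then have "supp_list B' (M @ G # r) P' = supp_list B' (G # M @ r) P'"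
      using list_weight_components[of M F] by (intro perm) simp_all
    then show "decompose G (\<lambda>B' L P'. supp_list B' (L @ M @ r) P') B' P' =
        supp_list B' (M @ G # r) P'"
      by (simp add: supp_list_Cons)
  qed
  finally show ?thesis .
qed

lemma supp_list_perm: "mset xs = mset ys \<Longrightarrow> supp_list B xs P = supp_list B ys P"
proof (induction "list_weight xs" arbitrary: xs ys B P rule: less_induct)
  case less
  show ?case
  proof (cases xs)
    case Nil
    then show ?thesis using less.prems by simp
  next
    case xs: (Cons G zs)
    then obtain F ws where ys: "ys = F # ws" using less.prems by (cases ys) auto
    have same_head: "supp_list B' (H # us) P' = supp_list B' (H # vs) P'"
      if "mset us = mset vs" "list_weight (H # us) = list_weight xs" for B' H us vs P'
      using that by (intro supp_list_Cons_cong less.hyps) (auto dest: list_weight_components)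
    show ?thesis
    proof (cases "G = F")
      case True
      then show ?thesis using same_head less.prems xs ys by simp
    next
      case False
      define r where "r = remove1 F zs"
      have "F \<in> set zs" using less.prems xs ys False
        by (metis insert_iff list.set_intros(1) mset_eq_setD set_ConsD)
      then have zs: "mset zs = mset (F # r)" by (simp add: r_def)
      have ws: "mset ws = mset (G # r)" using less.prems xs ys zs by (simp add: add_mset_commute)
      have weight: "list_weight xs = list_weight (G # F # r)"
        using xs list_weight_mset[OF zs] by simp
      have "supp_list B xs P = supp_list B (G # F # r) P"
        using same_head[OF zs] xs by simp
      also have "\<dots> = supp_list B (F # G # r) P"
        by (rule supp_list_swap_heads) (use less.hyps weight in simp)
      also have "\<dots> = supp_list B ys P"
        using same_head[OF ws[symmetric]] ys weight list_weight_mset[OF ws] by simp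
      finally show ?thesis .
    qed
  qed
qed

lemma supp_list_derivable: "derivable B {} P \<Longrightarrow> supp_list B xs P"
proof (induction B xs P rule: supp_list.induct)
  case (2 B p xs P)
  then show ?case using derivable_weaken_right[of B "{}" P "{p}"] by simp
next
  case (6 B A C xs P)
  then show ?case using derivable_weaken_right derivable_mono_base by auto
qed auto

lemma supp_list_append: "supp_list B xs P \<Longrightarrow> supp_list B (xs @ ys) P"
  by (induction B xs P rule: supp_list.induct) (auto intro: supp_list_derivable)

lemma supp_list_subset_mset:
  assumes "supp_list B xs P" "mset xs \<subseteq># mset ys"
  shows "supp_list B ys P"
proof -
  obtain zs where "mset ys = mset (xs @ zs)"
    using assms(2) by (metis ex_mset mset_append subset_mset.add_diff_inverse)
  then show ?thesis using supp_list_perm supp_list_append assms(1) by metis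
qed

lemma supp_list_swap: "supp_list B (x # y # xs) P = supp_list B (y # x # xs) P"
  by (rule supp_list_perm) (simp add: add_mset_commute)

lemma supp_list_contract: "supp_list B (A # A # xs) P \<Longrightarrow> supp_list B (A # xs) P"
proof (induction A arbitrary: B xs P)
  case (And A1 A2)
  have "supp_list B (And A1 A2 # A1 # xs) P" "supp_list B (And A1 A2 # A2 # xs) P"
    using And.prems supp_list_swap by auto
  then show ?case using And.IH by simp
next
  case (Or A1 A2)
  have "supp_list B (A1 # A2 # A1 # A2 # xs) P"
    using Or.prems supp_list_perm[of "A1 # A2 # Or A1 A2 # xs" "Or A1 A2 # A1 # A2 # xs"]
    by (simp add: add_mset_commute)
  then have "supp_list B (A1 # A1 # A2 # A2 # xs) P"
    using supp_list_perm[of "A1 # A2 # A1 # A2 # xs" "A1 # A1 # A2 # A2 # xs"]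
    by (simp add: add_mset_commute)
  then have "supp_list B (A1 # A2 # A2 # xs) P" by (rule Or.IH(1))
  then have "supp_list B (A2 # A2 # A1 # xs) P"
    using supp_list_perm[of "A1 # A2 # A2 # xs" "A2 # A2 # A1 # xs"]
    by (simp add: add_mset_commute)
  then have "supp_list B (A2 # A1 # xs) P" using Or.IH(2) by blast
  then show ?case using supp_list_swap by simp
next
  case (Imp A C)
  show ?case unfolding supp_list.simps
  proof (intro allI impI)
    fix B' :: "arule set" and \<Theta> :: "nat list"
    assume B': "is_base B' \<and> B \<subseteq> B'" and A: "supp B' (Atom ` set \<Theta> \<union> {A})"
    \<comment> \<open>the second copy of \<open>Imp A C\<close> is discharged with the same \<open>B'\<close> and \<open>\<Theta>\<close>\<close>
    have "supp_list B' (Imp A C # C # xs) (P \<union> set \<Theta>)"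
      using Imp.prems B' A supp_list_swap by simp
    then have "supp_list B' (C # C # xs) (P \<union> set \<Theta> \<union> set \<Theta>)"
      using B' A unfolding supp_list.simps(6) by blast
    then show "supp_list B' (C # xs) (P \<union> set \<Theta>)" using Imp.IH(2) by simp
  qed
qed simp_all

lemma supp_list_remdups: "supp_list B (remdups xs) P = supp_list B xs P"
proof (induction "length xs" arbitrary: xs rule: less_induct)
  case less
  show ?case
  proof (cases "distinct xs")
    case True
    then show ?thesis by (simp add: distinct_remdups_id)
  next
    case False
    then obtain as x bs cs where xs: "xs = as @ [x] @ bs @ [x] @ cs"
      by (metis not_distinct_decomp)
    define r where "r = as @ bs @ cs"
    have "mset (remdups xs) = mset (remdups (x # r))"
      by (rule set_eq_iff_mset_eq_distinct[THEN iffD1]) (auto simp: xs r_def)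
    then have "supp_list B (remdups xs) P = supp_list B (remdups (x # r)) P"
      by (rule supp_list_perm)
    also have "\<dots> = supp_list B (x # r) P"
      by (rule less.hyps) (simp add: xs r_def)
    also have "\<dots> = supp_list B xs P"
    proof
      assume "supp_list B (x # r) P"
      then show "supp_list B xs P" by (rule supp_list_subset_mset) (simp add: xs r_def)
    next
      assume "supp_list B xs P"
      then have "supp_list B (x # x # r) P" by (rule supp_list_subset_mset) (simp add: xs r_def)
      then show "supp_list B (x # r) P" by (rule supp_list_contract)
    qed
    finally show ?thesis .
  qed
qed

lemma supp_list_set_eq: "set xs = set ys \<Longrightarrow> supp_list B xs P = supp_list B ys P"
  by (metis supp_list_perm supp_list_remdups distinct_remdups set_eq_iff_mset_eq_distinct
      set_remdups)

lemma supp_list_map_Atom: "supp_list B (map Atom ps @ xs) P = supp_list B xs (P \<union> set ps)"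
  by (induction ps arbitrary: P) auto

lemma supp_list_atomic:
  "set xs \<subseteq> range Atom \<Longrightarrow> supp_list B xs P = derivable B {} (P \<union> atoms_of (set xs))"
proof (induction xs arbitrary: P)
  case (Cons F xs)
  then obtain p where "F = Atom p" by auto
  moreover have "atoms_of (insert (Atom p) (set xs)) = insert p (atoms_of (set xs))"
    by (auto simp: atoms_of_def)
  ultimately show ?case using Cons by simp
qed (simp add: atoms_of_def)

lemma supp_eq_supp_list: "set xs = S \<Longrightarrow> supp B S = supp_list B xs {}"
proof (induction B S arbitrary: xs rule: supp.induct)
  case (1 B S)
  have fin: "finite S" using 1(7) by auto
  show ?case
  proof (cases "S \<subseteq> range Atom")
    case True
    then show ?thesis using supp_atomic[OF fin True] supp_list_atomic[of xs B "{}"] 1(7) by simp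
  next
    case False
    define F where "F = (SOME F. F \<in> S \<and> F \<notin> range Atom)"
    have F: "F \<in> S" "F \<notin> range Atom" unfolding F_def using False
      by (metis (mono_tags, lifting) someI_ex subsetI)+
    obtain r where r: "set r = S - {F}" using fin by (meson finite_Diff finite_list)
    have xs: "supp_list B xs {} = supp_list B (F # r) {}"
      by (rule supp_list_set_eq) (use 1(7) F r in auto)
    have "\<not> infinite S" using fin by simp
    note IH = 1(1-6)[OF this False F_def refl]
    note unfold = supp_unfold[OF fin False F_def]
    show ?thesis
    proof (cases F)
      case Bot
      then show ?thesis unfolding unfold xs using IH(1)[OF Bot r] by simp
    next
      case (And A1 A2)
      then show ?thesis unfolding unfold xs
        using IH(2)[OF And, of "A1 # r"] IH(3)[OF And, of "A2 # r"] r by simp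
    next
      case (Or A1 A2)
      then show ?thesis unfolding unfold xs using IH(4)[OF Or, of "A1 # A2 # r"] r by simp
    next
      case (Imp A1 A2)
      have "supp B' (Atom ` set \<Theta> \<union> insert A2 (S - {F})) = supp_list B' (A2 # r) (set \<Theta>)"
        if "is_base B' \<and> B \<subseteq> B'" "supp B' (Atom ` set \<Theta> \<union> {A1})" for B' \<Theta>
        using IH(6)[OF Imp that, of "map Atom \<Theta> @ A2 # r"] r
          supp_list_map_Atom[of B' \<Theta> "A2 # r" "{}"] by simp
      then show ?thesis unfolding unfold xs using Imp by auto
    qed (use F in auto)
  qed
qed

lemma supp_list_iff_supp: "finite P \<Longrightarrow> supp_list B xs P = supp B (Atom ` P \<union> set xs)"
proof -
  assume "finite P"
  then obtain ps where "set ps = P" using finite_list by blast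
  then show ?thesis
    using supp_eq_supp_list[of "map Atom ps @ xs"] supp_list_map_Atom[of B ps xs "{}"] by simp
qed

lemma supp_insert_iff_supp_list: "set xs = S \<Longrightarrow> supp B (insert F S) = supp_list B (F # xs) {}"
  by (simp add: supp_eq_supp_list)

lemma supp_weaken:
  assumes "supp B S" "S \<subseteq> T" "finite T"
  shows "supp B T"
proof -
  obtain xs ys where xs: "set xs = S" and ys: "set ys = T"
    using supp_finite[OF assms(1)] assms(3) finite_list by metis
  have "supp_list B (xs @ ys) {}"
    using assms(1) supp_eq_supp_list[OF xs] supp_list_append by blast
  then show ?thesis
    using supp_eq_supp_list[OF ys] supp_list_set_eq[of "xs @ ys" ys] xs ys assms(2) by auto
qed

lemma supp_insert_Bot: "finite S \<Longrightarrow> supp B (insert Bot S) = supp B S"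
  by (metis finite_list supp_insert_iff_supp_list supp_eq_supp_list supp_list.simps(3))

lemma supp_insert_And:
  "finite S \<Longrightarrow> supp B (insert (And A C) S) = (supp B (insert A S) \<and> supp B (insert C S))"
  by (metis finite_list supp_insert_iff_supp_list supp_list.simps(4))

lemma supp_insert_Or: "finite S \<Longrightarrow> supp B (insert (Or A C) S) = supp B (insert A (insert C S))"
  by (metis finite_list list.simps(15) supp_insert_iff_supp_list supp_list.simps(5))

text \<open>The relation \<open>A \<Vdash>\<^sub>B S\<close> for a single formula \<open>A\<close>, as it appears in the clause for
implication.\<close>

definition supp_assuming :: "arule set \<Rightarrow> form \<Rightarrow> form set \<Rightarrow> bool" where
  "supp_assuming B A S \<longleftrightarrow> (\<forall>B' (\<Theta>::nat list). is_base B' \<and> B \<subseteq> B' \<longrightarrow>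
     supp B' (Atom ` set \<Theta> \<union> {A}) \<longrightarrow> supp B' (Atom ` set \<Theta> \<union> S))"

lemma supp_assuming_mono_base: "supp_assuming B A S \<Longrightarrow> B \<subseteq> C \<Longrightarrow> supp_assuming C A S"
  unfolding supp_assuming_def by blast

lemma supp_insert_Imp: "finite S \<Longrightarrow> supp B (insert (Imp A C) S) = supp_assuming B A (insert C S)"
proof -
  assume "finite S"
  then obtain xs where xs: "set xs = S" using finite_list by blast
  show ?thesis
    unfolding supp_insert_iff_supp_list[OF xs] supp_assuming_def
    by (simp add: supp_list_iff_supp xs)
qed

text \<open>Cut on \<open>A\<close> is admissible: decompose the other formulas of the context until only atoms
\<open>\<Theta>\<close> remain beside \<open>A\<close>, at which point \<open>A \<Vdash> Z\<close> applies.\<close>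

lemma supp_list_cut:
  "supp_list B (ys @ [A]) P \<Longrightarrow> finite P \<Longrightarrow> is_base B \<Longrightarrow> finite Z \<Longrightarrow> supp_assuming B A Z \<Longrightarrow>
   supp B (Atom ` P \<union> set ys \<union> Z)"
proof (induction "list_weight ys" arbitrary: ys B P rule: less_induct)
  case less
  show ?case
  proof (cases ys)
    case Nil
    obtain ps where ps: "set ps = P" using less.prems(2) finite_list by blast
    have "supp B (Atom ` set ps \<union> {A})"
      using less.prems(1,2) supp_list_iff_supp[of P B "[A]"] Nil ps by simp
    then have "supp B (Atom ` set ps \<union> Z)"
      using less.prems(3) less.prems(5)[unfolded supp_assuming_def, rule_format, of B ps] by simp
    then show ?thesis using Nil ps by simp
  next
    case (Cons G ys')
    let ?W = "Atom ` P \<union> set ys' \<union> Z"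
    have W: "finite ?W" using less.prems by simp
    have ys: "Atom ` P \<union> set ys \<union> Z = insert G ?W" using Cons by auto
    have IH: "supp B' (Atom ` P' \<union> set L \<union> Z)"
      if "supp_list B' (L @ [A]) P'" "list_weight L < list_weight ys" "finite P'" "is_base B'"
        "B \<subseteq> B'" for B' P' L
      using less.hyps[OF that(2,1,3,4) less.prems(4)]
        supp_assuming_mono_base[OF less.prems(5) that(5)] by blast
    show ?thesis
    proof (cases G)
      case (Atom p)
      have "supp B (Atom ` insert p P \<union> set ys' \<union> Z)"
        by (rule IH) (use less.prems Cons Atom in auto)
      then show ?thesis using ys Atom by (simp add: insert_commute)
    next
      case Bot
      have "supp B ?W" by (rule IH) (use less.prems Cons Bot in auto)
      then show ?thesis unfolding ys Bot supp_insert_Bot[OF W] .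
    next
      case (And A1 A2)
      have "supp B (insert A1 ?W)" "supp B (insert A2 ?W)"
        using less.prems Cons And IH[of B "A1 # ys'" P] IH[of B "A2 # ys'" P] by auto
      then show ?thesis unfolding ys And supp_insert_And[OF W] by simp
    next
      case (Or A1 A2)
      have "supp B (insert A1 (insert A2 ?W))"
        using less.prems Cons Or IH[of B "A1 # A2 # ys'" P] by auto
      then show ?thesis unfolding ys Or supp_insert_Or[OF W] .
    next
      case (Imp A1 A2)
      show ?thesis unfolding ys Imp supp_insert_Imp[OF W] supp_assuming_def
      proof (intro allI impI)
        fix B' :: "arule set" and \<Theta> :: "nat list"
        assume B': "is_base B' \<and> B \<subseteq> B'" and A1: "supp B' (Atom ` set \<Theta> \<union> {A1})"
        have "supp_list B' ((A2 # ys') @ [A]) (P \<union> set \<Theta>)"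
          using less.prems(1) B' A1 unfolding Cons Imp by simp
        then have "supp B' (Atom ` (P \<union> set \<Theta>) \<union> set (A2 # ys') \<union> Z)"
          by (rule IH) (use less.prems(2) B' Cons Imp in auto)
        then show "supp B' (Atom ` set \<Theta> \<union> insert A2 ?W)"
          by (simp add: image_Un Un_ac)
      qed
    qed
  qed
qed

lemma supp_cut:
  assumes "supp B (insert A Y)" "supp_assuming B A Z" "is_base B" "finite Z"
  shows "supp B (Y \<union> Z)"
proof -
  have "finite Y" using supp_finite[OF assms(1)] by simp
  then obtain ys where ys: "set ys = Y" using finite_list by blast
  have "Atom ` {} \<union> set (ys @ [A]) = insert A Y" using ys by auto
  then have "supp_list B (ys @ [A]) {}"
    using assms(1) supp_list_iff_supp[of "{}" B "ys @ [A]"] by simp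
  then have "supp B (Atom ` {} \<union> set ys \<union> Z)"
    by (rule supp_list_cut[OF _ finite.emptyI assms(3,4,2)])
  then show ?thesis using ys by simp
qed

text \<open>\<open>\<Gamma> \<Vdash>\<^sub>B \<Delta>\<close> for all bases at once: quantifying over all bases subsumes the extensions
in (Inf), and the case \<open>\<Gamma> = {}\<close> needs no separate treatment.\<close>

definition valid_in_every_base :: "form set \<Rightarrow> form set \<Rightarrow> bool" where
  "valid_in_every_base \<Gamma> \<Delta> \<longleftrightarrow> (\<forall>B (\<Theta>::form \<Rightarrow> nat list). is_base B \<longrightarrow>
     (\<forall>A\<in>\<Gamma>. supp B (Atom ` set (\<Theta> A) \<union> {A})) \<longrightarrow> supp B (Atom ` (\<Union>A\<in>\<Gamma>. set (\<Theta> A)) \<union> \<Delta>))"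

lemma valid_in_every_base_imp_valid: "valid_in_every_base \<Gamma> \<Delta> \<Longrightarrow> valid \<Gamma> \<Delta>"
  unfolding valid_in_every_base_def valid_def inf_def by auto

lemma CLp_finite: "CLp \<Gamma> \<Delta> \<Longrightarrow> finite \<Gamma> \<and> finite \<Delta>"
  by (induction rule: CLp.induct) auto

lemma valid_insert_supp_assuming:
  assumes valid: "valid_in_every_base (insert A \<Gamma>) \<Delta>" and fin: "finite \<Gamma>" "finite \<Delta>"
    and \<Gamma>: "\<forall>X\<in>\<Gamma>. supp B (Atom ` set (\<Theta> X) \<union> {X})"
  shows "supp_assuming B A (Atom ` (\<Union>X\<in>\<Gamma>. set (\<Theta> X)) \<union> \<Delta>)"
  unfolding supp_assuming_def
proof (intro allI impI)
  fix B' :: "arule set" and \<Theta>\<^sub>A :: "nat list"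
  assume B': "is_base B' \<and> B \<subseteq> B'" and A: "supp B' (Atom ` set \<Theta>\<^sub>A \<union> {A})"
  \<comment> \<open>\<open>A\<close> may also be a member of \<open>\<Gamma>\<close>, so it gets the atoms of both roles\<close>
  define \<Theta>' where "\<Theta>' X = (if X = A then \<Theta>\<^sub>A else []) @ (if X \<in> \<Gamma> then \<Theta> X else [])" for X
  have "supp B' (Atom ` set (\<Theta>' X) \<union> {X})" if X: "X \<in> insert A \<Gamma>" for X
  proof (cases "X = A")
    case True
    show ?thesis by (rule supp_weaken[OF A]) (auto simp: \<Theta>'_def True)
  next
    case False
    then show ?thesis using X \<Gamma> supp_mono_base B' by (auto simp: \<Theta>'_def)
  qed
  then have "supp B' (Atom ` (\<Union>X\<in>insert A \<Gamma>. set (\<Theta>' X)) \<union> \<Delta>)"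
    using valid B' unfolding valid_in_every_base_def by blast
  then show "supp B' (Atom ` set \<Theta>\<^sub>A \<union> (Atom ` (\<Union>X\<in>\<Gamma>. set (\<Theta> X)) \<union> \<Delta>))"
    by (rule supp_weaken) (use fin in \<open>auto simp: \<Theta>'_def split: if_splits\<close>)
qed

lemma valid_init:
  assumes fin: "finite \<Gamma>" "finite \<Delta>"
  shows "valid_in_every_base (insert A \<Gamma>) (insert A \<Delta>)"
  unfolding valid_in_every_base_def
proof (intro allI impI)
  fix B \<Theta> assume "\<forall>X\<in>insert A \<Gamma>. supp B (Atom ` set (\<Theta> X) \<union> {X})"
  then have "supp B (Atom ` set (\<Theta> A) \<union> {A})" by simp
  then show "supp B (Atom ` (\<Union>X\<in>insert A \<Gamma>. set (\<Theta> X)) \<union> insert A \<Delta>)"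
    by (rule supp_weaken) (use fin in auto)
qed

lemma valid_LBot: "finite \<Gamma> \<Longrightarrow> finite \<Delta> \<Longrightarrow> valid_in_every_base (insert Bot \<Gamma>) \<Delta>"
  unfolding valid_in_every_base_def
proof (intro allI impI)
  fix B \<Theta> assume fin: "finite \<Gamma>" "finite \<Delta>"
    and "\<forall>X\<in>insert Bot \<Gamma>. supp B (Atom ` set (\<Theta> X) \<union> {X})"
  then have "supp B (insert Bot (Atom ` set (\<Theta> Bot)))" by auto
  then have "supp B (Atom ` set (\<Theta> Bot))" by (simp add: supp_insert_Bot)
  then show "supp B (Atom ` (\<Union>X\<in>insert Bot \<Gamma>. set (\<Theta> X)) \<union> \<Delta>)"
    by (rule supp_weaken) (use fin in auto)
qed

lemma valid_RBot:
  assumes valid: "valid_in_every_base \<Gamma> \<Delta>" and fin: "finite \<Gamma>" "finite \<Delta>"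
  shows "valid_in_every_base \<Gamma> (insert Bot \<Delta>)"
  unfolding valid_in_every_base_def
proof (intro allI impI)
  fix B \<Theta> assume "is_base B" "\<forall>X\<in>\<Gamma>. supp B (Atom ` set (\<Theta> X) \<union> {X})"
  then have "supp B (Atom ` (\<Union>X\<in>\<Gamma>. set (\<Theta> X)) \<union> \<Delta>)"
    using valid unfolding valid_in_every_base_def by blast
  then show "supp B (Atom ` (\<Union>X\<in>\<Gamma>. set (\<Theta> X)) \<union> insert Bot \<Delta>)"
    by (rule supp_weaken) (use fin in auto)
qed

lemma valid_LAnd:
  assumes valid: "valid_in_every_base (insert A (insert B \<Gamma>)) \<Delta>" and fin: "finite \<Gamma>" "finite \<Delta>"
  shows "valid_in_every_base (insert (And A B) \<Gamma>) \<Delta>"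
  unfolding valid_in_every_base_def
proof (intro allI impI)
  fix C \<Theta> assume C: "is_base C" and hyps: "\<forall>X\<in>insert (And A B) \<Gamma>. supp C (Atom ` set (\<Theta> X) \<union> {X})"
  \<comment> \<open>\<open>A\<close> and \<open>B\<close> inherit the atoms of \<open>And A B\<close>\<close>
  define \<Theta>' where "\<Theta>' X = (if X \<in> insert (And A B) \<Gamma> then \<Theta> X else []) @
     (if X = A \<or> X = B then \<Theta> (And A B) else [])" for X
  have A: "supp C (insert A (Atom ` set (\<Theta> (And A B))))"
    and B: "supp C (insert B (Atom ` set (\<Theta> (And A B))))"
    using hyps supp_insert_And[of "Atom ` set (\<Theta> (And A B))" C A B] by auto
  have "supp C (Atom ` set (\<Theta>' X) \<union> {X})" if X: "X \<in> insert A (insert B \<Gamma>)" for X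
  proof -
    consider "X \<in> \<Gamma>" | "X = A" | "X = B" using X by auto
    then show ?thesis
    proof cases
      case 1
      show ?thesis by (rule supp_weaken[OF hyps[rule_format, of X]]) (use 1 in \<open>auto simp: \<Theta>'_def\<close>)
    next
      case 2
      show ?thesis by (rule supp_weaken[OF A]) (auto simp: \<Theta>'_def 2)
    next
      case 3
      show ?thesis by (rule supp_weaken[OF B]) (auto simp: \<Theta>'_def 3)
    qed
  qed
  then have "supp C (Atom ` (\<Union>X\<in>insert A (insert B \<Gamma>). set (\<Theta>' X)) \<union> \<Delta>)"
    using valid C unfolding valid_in_every_base_def by blast
  then show "supp C (Atom ` (\<Union>X\<in>insert (And A B) \<Gamma>. set (\<Theta> X)) \<union> \<Delta>)"
    by (rule supp_weaken) (use fin in \<open>auto simp: \<Theta>'_def split: if_splits\<close>)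
qed

lemma valid_RAnd:
  assumes valid: "valid_in_every_base \<Gamma> (insert A \<Delta>)" "valid_in_every_base \<Gamma>' (insert B \<Delta>')"
    and fin: "finite \<Gamma>" "finite \<Delta>" "finite \<Gamma>'" "finite \<Delta>'"
  shows "valid_in_every_base (\<Gamma> \<union> \<Gamma>') (insert (And A B) (\<Delta> \<union> \<Delta>'))"
  unfolding valid_in_every_base_def
proof (intro allI impI)
  fix C \<Theta> assume "is_base C" and hyps: "\<forall>X\<in>\<Gamma> \<union> \<Gamma>'. supp C (Atom ` set (\<Theta> X) \<union> {X})"
  let ?W = "Atom ` (\<Union>X\<in>\<Gamma> \<union> \<Gamma>'. set (\<Theta> X)) \<union> (\<Delta> \<union> \<Delta>')"
  have A: "supp C (Atom ` (\<Union>X\<in>\<Gamma>. set (\<Theta> X)) \<union> insert A \<Delta>)"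
    and B: "supp C (Atom ` (\<Union>X\<in>\<Gamma>'. set (\<Theta> X)) \<union> insert B \<Delta>')"
    using valid \<open>is_base C\<close> hyps unfolding valid_in_every_base_def by auto
  have "supp C (insert A ?W)" by (rule supp_weaken[OF A]) (use fin in auto)
  moreover have "supp C (insert B ?W)" by (rule supp_weaken[OF B]) (use fin in auto)
  ultimately show "supp C (Atom ` (\<Union>X\<in>\<Gamma> \<union> \<Gamma>'. set (\<Theta> X)) \<union> insert (And A B) (\<Delta> \<union> \<Delta>'))"
    using supp_insert_And[of ?W C A B] fin by simp
qed

lemma valid_ROr:
  assumes valid: "valid_in_every_base \<Gamma> (insert A (insert B \<Delta>))" and fin: "finite \<Gamma>" "finite \<Delta>"
  shows "valid_in_every_base \<Gamma> (insert (Or A B) \<Delta>)"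
  using valid supp_insert_Or[of "Atom ` (\<Union>X\<in>\<Gamma>. set (_ X)) \<union> \<Delta>"] fin
  unfolding valid_in_every_base_def by simp

lemma valid_LOr:
  assumes valid: "valid_in_every_base (insert A \<Gamma>) \<Delta>" "valid_in_every_base (insert B \<Gamma>') \<Delta>'"
    and fin: "finite \<Gamma>" "finite \<Delta>" "finite \<Gamma>'" "finite \<Delta>'"
  shows "valid_in_every_base (insert (Or A B) (\<Gamma> \<union> \<Gamma>')) (\<Delta> \<union> \<Delta>')"
  unfolding valid_in_every_base_def
proof (intro allI impI)
  fix C \<Theta> assume C: "is_base C"
    and hyps: "\<forall>X\<in>insert (Or A B) (\<Gamma> \<union> \<Gamma>'). supp C (Atom ` set (\<Theta> X) \<union> {X})"
  let ?P = "Atom ` set (\<Theta> (Or A B))"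
  let ?Z = "Atom ` (\<Union>X\<in>\<Gamma>. set (\<Theta> X)) \<union> \<Delta>" and ?Z' = "Atom ` (\<Union>X\<in>\<Gamma>'. set (\<Theta> X)) \<union> \<Delta>'"
  have A: "supp_assuming C A ?Z" and B: "supp_assuming C B ?Z'"
    using valid_insert_supp_assuming[OF valid(1) fin(1,2)]
      valid_insert_supp_assuming[OF valid(2) fin(3,4)] hyps by auto
  have "supp C (insert (Or A B) ?P)" using hyps by auto
  then have "supp C (insert A (insert B ?P))" by (simp add: supp_insert_Or)
  then have "supp C (insert B ?P \<union> ?Z)" by (rule supp_cut[OF _ A C]) (use fin in simp)
  then have "supp C (insert B (?P \<union> ?Z))" by simp
  then have "supp C (?P \<union> ?Z \<union> ?Z')" by (rule supp_cut[OF _ B C]) (use fin in simp)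
  then show "supp C (Atom ` (\<Union>X\<in>insert (Or A B) (\<Gamma> \<union> \<Gamma>'). set (\<Theta> X)) \<union> (\<Delta> \<union> \<Delta>'))"
    by (rule supp_weaken) (use fin in auto)
qed

lemma valid_LImp:
  assumes valid: "valid_in_every_base \<Gamma> (insert A \<Delta>)" "valid_in_every_base (insert B \<Gamma>') \<Delta>'"
    and fin: "finite \<Gamma>" "finite \<Delta>" "finite \<Gamma>'" "finite \<Delta>'"
  shows "valid_in_every_base (insert (Imp A B) (\<Gamma> \<union> \<Gamma>')) (\<Delta> \<union> \<Delta>')"
  unfolding valid_in_every_base_def
proof (intro allI impI)
  fix C \<Theta> assume C: "is_base C"
    and hyps: "\<forall>X\<in>insert (Imp A B) (\<Gamma> \<union> \<Gamma>'). supp C (Atom ` set (\<Theta> X) \<union> {X})"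
  let ?P = "Atom ` set (\<Theta> (Imp A B))"
  let ?Z = "Atom ` (\<Union>X\<in>\<Gamma>. set (\<Theta> X)) \<union> \<Delta>" and ?Z' = "Atom ` (\<Union>X\<in>\<Gamma>'. set (\<Theta> X)) \<union> \<Delta>'"
  have B: "supp_assuming C B ?Z'"
    using valid_insert_supp_assuming[OF valid(2) fin(3,4)] hyps by auto
  have "supp C (insert (Imp A B) ?P)" using hyps by auto
  then have A: "supp_assuming C A (insert B ?P)" by (simp add: supp_insert_Imp)
  have "supp C (insert A ?Z)" using valid(1) C hyps unfolding valid_in_every_base_def by auto
  then have "supp C (?Z \<union> insert B ?P)" by (rule supp_cut[OF _ A C]) (use fin in simp)
  then have "supp C (insert B (?Z \<union> ?P))" by simp
  then have "supp C (?Z \<union> ?P \<union> ?Z')" by (rule supp_cut[OF _ B C]) (use fin in simp)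
  then show "supp C (Atom ` (\<Union>X\<in>insert (Imp A B) (\<Gamma> \<union> \<Gamma>'). set (\<Theta> X)) \<union> (\<Delta> \<union> \<Delta>'))"
    by (rule supp_weaken) (use fin in auto)
qed

lemma valid_RImp:
  assumes valid: "valid_in_every_base (insert A \<Gamma>) (insert B \<Delta>)" and fin: "finite \<Gamma>" "finite \<Delta>"
  shows "valid_in_every_base \<Gamma> (insert (Imp A B) \<Delta>)"
  unfolding valid_in_every_base_def
proof (intro allI impI)
  fix C \<Theta> assume "\<forall>X\<in>\<Gamma>. supp C (Atom ` set (\<Theta> X) \<union> {X})"
  then have "supp_assuming C A (Atom ` (\<Union>X\<in>\<Gamma>. set (\<Theta> X)) \<union> insert B \<Delta>)"
    using valid_insert_supp_assuming[OF valid fin(1) finite.insertI[OF fin(2)]] by blast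
  then show "supp C (Atom ` (\<Union>X\<in>\<Gamma>. set (\<Theta> X)) \<union> insert (Imp A B) \<Delta>)"
    using supp_insert_Imp[of "Atom ` (\<Union>X\<in>\<Gamma>. set (\<Theta> X)) \<union> \<Delta>" C A B] fin by simp
qed

lemma CLp_valid_in_every_base: "CLp \<Gamma> \<Delta> \<Longrightarrow> valid_in_every_base \<Gamma> \<Delta>"
proof (induction rule: CLp.induct)
  case (init \<Gamma> \<Delta> A)
  then show ?case by (rule valid_init)
next
  case (LBot \<Gamma> \<Delta>)
  then show ?case by (rule valid_LBot)
next
  case (RBot \<Gamma> \<Delta>)
  show ?case by (rule valid_RBot[OF RBot.IH]) (use CLp_finite[OF RBot.hyps] in auto)
next
  case (LAnd A B \<Gamma> \<Delta>)
  show ?case by (rule valid_LAnd[OF LAnd.IH]) (use CLp_finite[OF LAnd.hyps] in auto)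
next
  case (RAnd \<Gamma> A \<Delta> \<Gamma>' B \<Delta>')
  show ?case
    by (rule valid_RAnd[OF RAnd.IH]) (use CLp_finite[OF RAnd.hyps(1)] CLp_finite[OF RAnd.hyps(2)] in auto)
next
  case (LOr A \<Gamma> \<Delta> B \<Gamma>' \<Delta>')
  show ?case
    by (rule valid_LOr[OF LOr.IH]) (use CLp_finite[OF LOr.hyps(1)] CLp_finite[OF LOr.hyps(2)] in auto)
next
  case (ROr \<Gamma> A B \<Delta>)
  show ?case by (rule valid_ROr[OF ROr.IH]) (use CLp_finite[OF ROr.hyps] in auto)
next
  case (LImp \<Gamma> A \<Delta> B \<Gamma>' \<Delta>')
  show ?case
    by (rule valid_LImp[OF LImp.IH]) (use CLp_finite[OF LImp.hyps(1)] CLp_finite[OF LImp.hyps(2)] in auto)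
next
  case (RImp A \<Gamma> B \<Delta>)
  show ?case by (rule valid_RImp[OF RImp.IH]) (use CLp_finite[OF RImp.hyps] in auto)
qed

theorem theorem2:
  fixes \<Gamma> \<Delta> :: "form set"
  assumes "finite \<Gamma>" and "finite \<Delta>" and "CLp \<Gamma> \<Delta>"
  shows "valid \<Gamma> \<Delta>"
  using CLp_valid_in_every_base[OF assms(3)] by (rule valid_in_every_base_imp_valid)

end
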